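(* Let $G$ be a weighted voting game on players $N=\{1,\dots,n\}$ with characteristic function $v$. Then there exists a weighted representation $[q;w_1,\dots,w_n]$ of $G$ such that for all coalitions $C\neq C'$ with $v(C)=v(C')=1$ we have $\sum_{i\in C}w_i\neq\sum_{i\in C'}w_i$.
   Context: A simple game on $N$ is a function $v:2^N\to\{0,1\}$. It is a weighted voting game if there are $q\ge0$ and $w_1,\dots,w_n\ge0$ such that for all $S\subseteq N$: $v(S)=1\iff\sum_{j\in S}w_j\ge q$; such a vector $[q;w_1,\dots,w_n]$ is a weighted representation. *)

theory Defs
  imports Main "HOL.Real"
begin

text \<open>Players are N = {1..n}. A simple game is a function v from coalitions
  (subsets of {1..n}) to {0,1}; values of v outside Pow {1..n} are irrelevant.\<close>

definition simple_game :: "nat \<Rightarrow> (nat set \<Rightarrow> nat) \<Rightarrow> bool" where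
  "simple_game n v \<longleftrightarrow> (\<forall>S. S \<subseteq> {1..n} \<longrightarrow> v S \<in> {0, 1})"

definition weighted_representation ::
    "nat \<Rightarrow> (nat set \<Rightarrow> nat) \<Rightarrow> real \<Rightarrow> (nat \<Rightarrow> real) \<Rightarrow> bool" where
  "weighted_representation n v q w \<longleftrightarrow>
     q \<ge> 0 \<and> (\<forall>i\<in>{1..n}. w i \<ge> 0) \<and>
     (\<forall>S. S \<subseteq> {1..n} \<longrightarrow> (v S = 1 \<longleftrightarrow> (\<Sum>j\<in>S. w j) \<ge> q))"

definition weighted_voting_game :: "nat \<Rightarrow> (nat set \<Rightarrow> nat) \<Rightarrow> bool" where
  "weighted_voting_game n v \<longleftrightarrow>
     simple_game n v \<and> (\<exists>q w. weighted_representation n v q w)"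

end

theory Submission
  imports Defs "HOL-Library.Nat_Bijection"
begin

text \<open>Losing coalitions fall short of the quota by some fixed \<open>\<delta> > 0\<close>, so adding
  \<open>\<epsilon> 2\<^sup>i\<close> to the weight of player \<open>i\<close> keeps the representation valid once
  \<open>\<epsilon> \<Sum>\<^sub>i 2\<^sup>i < \<delta>\<close>. The new weight of a coalition \<open>C\<close> is \<open>w(C) + \<epsilon> e(C)\<close>, where
  \<open>e(C) = \<Sum>\<^sub>i\<^sub>\<in>\<^sub>C 2\<^sup>i\<close> is injective on coalitions; two coalitions tie for at most one
  value of \<open>\<epsilon>\<close>, so all but finitely many small \<open>\<epsilon>\<close> separate every pair.\<close>

lemma finite_uniform_gap:
  fixes f :: "'a \<Rightarrow> real"
  assumes "finite A" and "\<And>x. x \<in> A \<Longrightarrow> f x < q"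
  obtains \<delta> where "0 < \<delta>" and "\<And>x. x \<in> A \<Longrightarrow> f x \<le> q - \<delta>"
proof (cases "A = {}")
  case True
  then show ?thesis using that[of 1] by simp
next
  case False
  let ?\<delta> = "Min ((\<lambda>x. q - f x) ` A)"
  have "?\<delta> \<in> (\<lambda>x. q - f x) ` A" using assms(1) False by simp
  then have "0 < ?\<delta>" using assms(2) by auto
  moreover have "f x \<le> q - ?\<delta>" if "x \<in> A" for x
  proof -
    have "?\<delta> \<le> q - f x" using assms(1) that by simp
    then show ?thesis by simp
  qed
  ultimately show ?thesis using that by blast
qed

lemma weighted_representation_losing_gap:
  assumes "weighted_representation n v q w"
  obtains \<delta> where "0 < \<delta>"
    and "\<And>S. S \<subseteq> {1..n} \<Longrightarrow> v S \<noteq> 1 \<Longrightarrow> (\<Sum>j\<in>S. w j) \<le> q - \<delta>"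
proof -
  let ?L = "{S. S \<subseteq> {1..n} \<and> v S \<noteq> 1}"
  have "sum w S < q" if "S \<in> ?L" for S
    using assms that unfolding weighted_representation_def by auto
  then obtain \<delta> where "0 < \<delta>" and "\<And>S. S \<in> ?L \<Longrightarrow> sum w S \<le> q - \<delta>"
    using finite_uniform_gap[of ?L "sum w" q] by auto
  then show ?thesis using that by auto
qed

lemma weighted_representation_add_small:
  assumes rep: "weighted_representation n v q w"
    and gap: "\<And>S. S \<subseteq> {1..n} \<Longrightarrow> v S \<noteq> 1 \<Longrightarrow> (\<Sum>j\<in>S. w j) \<le> q - \<delta>"
    and u_nonneg: "\<And>i. i \<in> {1..n} \<Longrightarrow> 0 \<le> u i"
    and u_small: "(\<Sum>i\<in>{1..n}. u i) < \<delta>"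
  shows "weighted_representation n v q (\<lambda>i. w i + u i)"
  unfolding weighted_representation_def
proof (intro conjI ballI allI impI)
  show "0 \<le> q" and "\<And>i. i \<in> {1..n} \<Longrightarrow> 0 \<le> w i + u i"
    using rep u_nonneg unfolding weighted_representation_def by auto
next
  fix S assume S: "S \<subseteq> {1..n}"
  have u_S: "0 \<le> (\<Sum>i\<in>S. u i)" "(\<Sum>i\<in>S. u i) < \<delta>"
    using S u_nonneg sum_mono2[OF _ S, of u] u_small by (auto intro!: sum_nonneg)
  have sum_split: "(\<Sum>i\<in>S. w i + u i) = (\<Sum>i\<in>S. w i) + (\<Sum>i\<in>S. u i)"
    by (rule sum.distrib)
  show "v S = 1 \<longleftrightarrow> q \<le> (\<Sum>i\<in>S. w i + u i)"
  proof
    assume "v S = 1"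
    then have "q \<le> (\<Sum>i\<in>S. w i)" using rep S unfolding weighted_representation_def by auto
    then show "q \<le> (\<Sum>i\<in>S. w i + u i)" using sum_split u_S by linarith
  next
    assume "q \<le> (\<Sum>i\<in>S. w i + u i)"
    then show "v S = 1" using gap[OF S] sum_split u_S by (cases "v S = 1") auto
  qed
qed

lemma inj_on_sum_power2:
  assumes "finite A"
  shows "inj_on (\<lambda>S. \<Sum>i\<in>S. (2::real) ^ i) (Pow A)"
proof (rule inj_onI)
  fix C C' assume "C \<in> Pow A" "C' \<in> Pow A"
  then have fin: "finite C" "finite C'" using assms finite_subset by auto
  assume "(\<Sum>i\<in>C. (2::real) ^ i) = (\<Sum>i\<in>C'. 2 ^ i)"
  then have "real (set_encode C) = real (set_encode C')"
    unfolding set_encode_def by simp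
  then show "C = C'" using set_encode_eq[OF fin] by simp
qed

text \<open>The pair \<open>x \<noteq> y\<close> collides only for \<open>\<epsilon> = (f y - f x) / (g x - g y)\<close>.\<close>

lemma small_perturbation_inj_on:
  fixes f g :: "'a \<Rightarrow> real"
  assumes "finite A" and "inj_on g A" and "0 < b"
  obtains \<epsilon> where "0 < \<epsilon>" and "\<epsilon> < b" and "inj_on (\<lambda>x. f x + \<epsilon> * g x) A"
proof -
  define bad where "bad = (\<lambda>(x, y). (f y - f x) / (g x - g y)) ` (A \<times> A)"
  have "finite bad" unfolding bad_def using assms(1) by simp
  moreover have "infinite {0<..<b}" using assms(3) by (rule infinite_Ioo)
  ultimately obtain \<epsilon> where \<epsilon>: "\<epsilon> \<in> {0<..<b}" "\<epsilon> \<notin> bad"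
    by (metis finite_subset subsetI)
  have "inj_on (\<lambda>x. f x + \<epsilon> * g x) A"
  proof (rule inj_onI, rule ccontr)
    fix x y assume xy: "x \<in> A" "y \<in> A" "x \<noteq> y" and eq: "f x + \<epsilon> * g x = f y + \<epsilon> * g y"
    have "g x \<noteq> g y" using assms(2) xy by (auto dest: inj_onD)
    with eq have "\<epsilon> = (f y - f x) / (g x - g y)" by (simp add: field_simps)
    then have "\<epsilon> \<in> bad" unfolding bad_def using xy by force
    with \<epsilon>(2) show False ..
  qed
  with \<epsilon>(1) show ?thesis using that by auto
qed

theorem lemma6:
  fixes n :: nat and v :: "nat set \<Rightarrow> nat"
  assumes "weighted_voting_game n v"
  shows "\<exists>q w. weighted_representation n v q w \<and>
           (\<forall>C C'. C \<subseteq> {1..n} \<longrightarrow> C' \<subseteq> {1..n} \<longrightarrow> C \<noteq> C' \<longrightarrow>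
              v C = 1 \<longrightarrow> v C' = 1 \<longrightarrow> (\<Sum>i\<in>C. w i) \<noteq> (\<Sum>i\<in>C'. w i))"
proof -
  obtain q w where rep: "weighted_representation n v q w"
    using assms unfolding weighted_voting_game_def by blast
  obtain \<delta> where "0 < \<delta>"
    and gap: "\<And>S. S \<subseteq> {1..n} \<Longrightarrow> v S \<noteq> 1 \<Longrightarrow> (\<Sum>j\<in>S. w j) \<le> q - \<delta>"
    using weighted_representation_losing_gap[OF rep] by blast
  define M where "M = (\<Sum>i\<in>{1..n}. (2::real) ^ i)"
  have "0 \<le> M" unfolding M_def by (simp add: sum_nonneg)
  then have "0 < \<delta> / (M + 1)" using \<open>0 < \<delta>\<close> by simp
  then obtain \<epsilon> where "0 < \<epsilon>" "\<epsilon> < \<delta> / (M + 1)"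
    and inj: "inj_on (\<lambda>S. (\<Sum>j\<in>S. w j) + \<epsilon> * (\<Sum>i\<in>S. 2 ^ i)) (Pow {1..n})"
    using small_perturbation_inj_on[of "Pow {1..n}" "\<lambda>S. \<Sum>i\<in>S. 2 ^ i" "\<delta> / (M + 1)"]
      inj_on_sum_power2[of "{1..n}"] by auto
  define w' where "w' i = w i + \<epsilon> * 2 ^ i" for i
  have sum_w': "(\<Sum>i\<in>S. w' i) = (\<Sum>j\<in>S. w j) + \<epsilon> * (\<Sum>i\<in>S. 2 ^ i)" for S
    unfolding w'_def by (simp add: sum.distrib sum_distrib_left)
  have "\<epsilon> * M < \<delta>"
    using \<open>\<epsilon> < \<delta> / (M + 1)\<close> \<open>0 < \<epsilon>\<close> \<open>0 \<le> M\<close> by (simp add: field_simps)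
  then have "weighted_representation n v q w'"
    unfolding w'_def M_def sum_distrib_left
    using weighted_representation_add_small[OF rep gap] \<open>0 < \<epsilon>\<close> by simp
  moreover have "(\<Sum>i\<in>C. w' i) \<noteq> (\<Sum>i\<in>C'. w' i)"
    if "C \<subseteq> {1..n}" "C' \<subseteq> {1..n}" "C \<noteq> C'" for C C'
    using inj_onD[OF inj, of C C'] that unfolding sum_w' by auto
  ultimately show ?thesis by blast
qed

end
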